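(* $$\sum_{n\geq 1}\frac{\binom{4n}{2n}\binom{2n}{n}}{n\,64^n} = \frac{3}{16}\cdot {}_{4}F_{3}\left[ \begin{matrix} 1,1,\tfrac{5}{4},\tfrac{7}{4} \\ 2,2,2 \end{matrix} \ \Bigg| \ 1 \right] = 6\ln 2-2\ln(1+\sqrt{2})-\frac{16}{\pi}\operatorname{Im}\operatorname{Li}_2\!\left[(\sqrt{2}-1)i\right].$$
   Context: ${}_pF_q\left[\begin{matrix} a_1,\dots,a_p\\ b_1,\dots,b_q\end{matrix}\,\Big|\, z\right] = \sum_{n\ge 0} \frac{(a_1)_n\cdots(a_p)_n}{(b_1)_n\cdots(b_q)_n}\frac{z^n}{n!}$ with $(x)_n = \Gamma(x+n)/\Gamma(x)$. $\operatorname{Li}_2(z) = \sum_{k\ge1} z^k/k^2$ is the dilogarithm. *)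

theory Defs
  imports "HOL-Analysis.Analysis"
begin

definition hypergeom_term :: "real list \<Rightarrow> real list \<Rightarrow> real \<Rightarrow> nat \<Rightarrow> real" where
  "hypergeom_term as bs z n =
     (\<Prod>a\<leftarrow>as. pochhammer a n) / (\<Prod>b\<leftarrow>bs. pochhammer b n) * z ^ n / fact n"

definition hypergeom :: "real list \<Rightarrow> real list \<Rightarrow> real \<Rightarrow> real" where
  "hypergeom as bs z = (\<Sum>n. hypergeom_term as bs z n)"

definition Li2 :: "complex \<Rightarrow> complex" where
  "Li2 z = (\<Sum>k. z ^ (Suc k) / of_nat (Suc k) ^ 2)"

end

theory Submission
  imports Defs
begin

(* Let w m = (2m choose m) / 4^m, so that the integral of cos^(2m) over [0, pi/2] is pi/2 * w m and the
   n-th term of the series is w (2n) * w n / n. Integrating term by term, pi/2 times the series is the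
   integral of the sum of w (2n) / n * cos^(2n) t, the even part of the generating function
   sum w m y^m / m = 2 ln 2 - 2 ln (1 + sqrt (1 - y)) at y = cos t. By half-angle formulas this even part
   is a sum of logarithms of cosines of t/4 shifted by multiples of pi/8, so the series is a combination
   of values of L x = integral of ln cos over [0, x] at pi/8 and 3 pi/8. The duplication formula for L and
   the constancy of -(pi/2 - 2t) ln 2 + L (pi/2 - 2t) + 4 L t + 2t ln (tan t) - 2 Ti2 (tan t), whose
   derivative vanishes since Ti2' y = arctan y / y, reduce these values to ln 2, ln (1 + sqrt 2) and
   Ti2 (sqrt 2 - 1) = Im Li2 (i (sqrt 2 - 1)). The hypergeometric form is read off the term ratio. *)

section \<open>Central binomial ratios\<close>

definition wallis :: "nat \<Rightarrow> real" where
  "wallis m = real ((2*m) choose m) / 4^m"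

lemma wallis_0: "wallis 0 = 1"
  by (simp add: wallis_def)

lemma wallis_pos: "wallis m > 0"
  by (simp add: wallis_def)

lemma wallis_nonneg: "wallis m \<ge> 0"
  using wallis_pos[of m] by simp

lemma wallis_Suc: "wallis (Suc m) = wallis m * (2*real m + 1) / (2*real m + 2)"
proof -
  have central: "real ((2*k) choose k) = fact (2*k) / (fact k)^2" for k
    by (simp add: binomial_fact power2_eq_square mult_2)
  have fact2: "fact (2 * Suc m) = (fact (2*m) :: real) * (2*real m + 1) * (2*real m + 2)"
    by (simp add: fact_Suc algebra_simps)
  have fact1: "(fact (Suc m) :: real) = fact m * (real m + 1)"
    by (simp add: fact_Suc algebra_simps)
  have "wallis (Suc m) = fact (2*m) * (2*real m + 1) * (2*real m + 2)
                         / ((fact m)^2 * (real m + 1)^2 * (4 * 4^m))"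
    unfolding wallis_def central fact2 fact1 power_mult_distrib power_Suc
    by (simp add: power2_eq_square algebra_simps)
  also have "\<dots> = (fact (2*m) / ((fact m)^2 * 4^m)) * (2*real m + 1)
                  * ((2*real m + 2) / (4 * (real m + 1)^2))"
    by (simp add: field_simps)
  also have "(2*real m + 2) / (4 * (real m + 1)^2) = 1 / (2*real m + 2)"
  proof -
    have pos: "2*real m + 2 > 0"
      by simp
    have "4 * (real m + 1)^2 = (2*real m + 2) * (2*real m + 2)"
      by (simp add: power2_eq_square algebra_simps)
    then show ?thesis
      by (subst \<open>4 * (real m + 1)^2 = _\<close>) (use pos in simp)
  qed
  finally show ?thesis
    unfolding wallis_def central by simp
qed

lemma wallis_double_Suc:
  "wallis (2 * Suc m) = wallis (2*m) * (4*real m + 1) * (4*real m + 3) / ((4*real m + 2) * (4*real m + 4))"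
proof -
  have "wallis (2 * Suc m) = wallis (Suc (Suc (2*m)))"
    by simp
  also have "\<dots> = wallis (2*m) * (4*real m + 1) / (4*real m + 2) * (4*real m + 3) / (4*real m + 4)"
    unfolding wallis_Suc by (simp add: algebra_simps)
  finally show ?thesis
    by simp
qed

lemma wallis_sq_le: "(wallis m)^2 * (real m + 1) \<le> 1"
proof (induction m)
  case 0
  then show ?case
    by (simp add: wallis_0)
next
  case (Suc m)
  have "(wallis (Suc m))^2 * (real (Suc m) + 1)
        = (wallis m)^2 * ((2*real m + 1)^2 * (real m + 2) / (2*real m + 2)^2)"
    by (simp add: wallis_Suc power_divide power_mult_distrib field_simps)
       (simp add: algebra_simps power2_eq_square)
  also have "\<dots> \<le> (wallis m)^2 * (real m + 1)"
  proof (rule mult_left_mono)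
    have "(2*real m + 1)^2 * (real m + 2) \<le> (real m + 1) * (2*real m + 2)^2"
      by (simp add: power2_eq_square algebra_simps)
    then show "(2*real m + 1)^2 * (real m + 2) / (2*real m + 2)^2 \<le> real m + 1"
      by (simp add: divide_le_eq)
  qed simp
  finally show ?case
    using Suc.IH by simp
qed

lemma wallis_le_1: "wallis m \<le> 1"
proof -
  have "(wallis m)^2 \<le> (wallis m)^2 * (real m + 1)"
    by (simp add: mult_le_cancel_left1)
  then have "(wallis m)^2 \<le> 1"
    using wallis_sq_le[of m] by simp
  then show ?thesis
    using wallis_pos[of m] by (simp add: power_le_one_iff abs_le_iff power2_le_iff_abs_le)
qed

lemma wallis_eq_gbinomial: "wallis m = (-1)^m * ((-1/2::real) gchoose m)"
proof (induction m)
  case 0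
  then show ?case
    by (simp add: wallis_0)
next
  case (Suc m)
  have step: "((-1/2::real) gchoose Suc m) = ((-1/2) gchoose m) * (-1/2 - real m) / (real m + 1)"
    using gbinomial_mult_1[of "-1/2::real" m] by (simp add: field_simps)
  show ?case
    unfolding wallis_Suc Suc.IH step by (simp add: field_simps)
qed

lemma wallis_sums: "\<bar>y\<bar> < 1 \<Longrightarrow> (\<lambda>m. wallis m * y^m) sums (1 / sqrt (1 - y))"
proof -
  assume y: "\<bar>y\<bar> < 1"
  have "(\<lambda>n. ((-1/2::real) gchoose n) * (-y)^n) sums (1 + -y) powr (-1/2)"
    using y by (intro gen_binomial_real) simp
  moreover have "((-1/2::real) gchoose n) * (-y)^n = wallis n * y^n" for n
  proof -
    have "(-1::real)^n * (-1)^n = 1"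
      by (simp flip: power_mult_distrib)
    then show ?thesis
      unfolding wallis_eq_gbinomial power_minus[of y n] by (simp only: mult_ac)
  qed
  moreover have "(1 + -y) powr (-1/2) = 1 / sqrt (1 - y)"
  proof -
    have "(1 - y) powr (-1/2) = inverse ((1 - y) powr (1/2))"
      using powr_minus[of "1 - y" "1/2"] by simp
    also have "(1 - y) powr (1/2) = sqrt (1 - y)"
      using y by (intro powr_half_sqrt) simp
    finally show ?thesis
      by (simp add: inverse_eq_divide)
  qed
  ultimately show ?thesis
    by simp
qed

definition binom_term :: "nat \<Rightarrow> real" where
  "binom_term n = real ((4*n) choose (2*n)) * real ((2*n) choose n) / (real n * 64 ^ n)"

lemma binom_term_eq_wallis: "binom_term n = wallis (2*n) * wallis n / n"
proof -
  have "real ((4*n) choose (2*n)) = wallis (2*n) * 16^n"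
    using power_mult[of "4::real" 2 n] by (simp add: wallis_def)
  moreover have "real ((2*n) choose n) = wallis n * 4^n"
    by (simp add: wallis_def)
  ultimately show ?thesis
    unfolding binom_term_def by (simp add: field_simps power_mult_distrib[symmetric])
qed

lemma binom_term_Suc_Suc:
  "binom_term (Suc (Suc n)) = binom_term (Suc n) * ((real n + 5/4) * (real n + 7/4) * (real n + 1) / (real n + 2)^3)"
proof -
  define a where "a = wallis (2 * Suc n)"
  define b where "b = wallis (Suc n)"
  have "binom_term (Suc (Suc n))
        = (a * (4*real n + 5) * (4*real n + 7) / ((4*real n + 6) * (4*real n + 8)))
          * (b * (2*real n + 3) / (2*real n + 4)) / (real n + 2)"
    unfolding binom_term_eq_wallis wallis_double_Suc[of "Suc n"] wallis_Suc[of "Suc n"] a_def b_def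
    by (simp add: algebra_simps)
  also have "\<dots> = (a * b / (real n + 1)) * ((real n + 5/4) * (real n + 7/4) * (real n + 1) / (real n + 2)^3)"
    by (simp add: divide_simps) (simp add: algebra_simps power3_eq_cube)
  finally show ?thesis
    unfolding binom_term_eq_wallis a_def b_def by (simp add: add.commute)
qed

lemma prod_list_map_times:
  "(\<Prod>x\<leftarrow>xs. f x * g x) = (\<Prod>x\<leftarrow>xs. f x) * (\<Prod>x\<leftarrow>xs. g x :: 'a::comm_monoid_mult)"
  by (induction xs) (simp_all add: mult_ac)

text \<open>No hypothesis on the lower parameters is needed: if some b + n vanishes, both sides are 0
  by the convention x / 0 = 0.\<close>
lemma hypergeom_term_Suc:
  "hypergeom_term as bs z (Suc n)
   = hypergeom_term as bs z n * ((\<Prod>a\<leftarrow>as. a + of_nat n) / (\<Prod>b\<leftarrow>bs. b + of_nat n) * z / of_nat (Suc n))"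
  by (simp add: hypergeom_term_def pochhammer_Suc prod_list_map_times fact_Suc
      divide_inverse inverse_mult_distrib mult_ac)

lemma binom_term_Suc_eq_hypergeom_term:
  "binom_term (Suc n) = 3/16 * hypergeom_term [1, 1, 5/4, 7/4] [2, 2, 2] 1 n"
proof (induction n)
  case 0
  then show ?case
    by (simp add: binom_term_def hypergeom_term_def binomial_fact numeral_eq_Suc)
next
  case (Suc n)
  have ratio: "(\<Prod>a\<leftarrow>[1, 1, 5/4, 7/4]. a + real n) / (\<Prod>b\<leftarrow>[2, 2, 2]. b + real n) * 1 / real (Suc n)
        = (real n + 5/4) * (real n + 7/4) * (real n + 1) / (real n + 2)^3"
    by (simp add: divide_simps) (simp add: algebra_simps power3_eq_cube)
  show ?case
    unfolding binom_term_Suc_Suc Suc.IH hypergeom_term_Suc ratio by simp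
qed

lemma wallis_double_mult_le: "wallis (2*n) * wallis n * (real n + 1) \<le> 1"
proof -
  have "(wallis (2*n) * wallis n * (real n + 1))^2
        = (wallis (2*n))^2 * (wallis n)^2 * ((real n + 1) * (real n + 1))"
    by (simp add: power_mult_distrib power2_eq_square)
  also have "\<dots> \<le> (wallis (2*n))^2 * (wallis n)^2 * ((2*real n + 1) * (real n + 1))"
    by (intro mult_left_mono mult_right_mono) auto
  also have "\<dots> = ((wallis (2*n))^2 * (2*real n + 1)) * ((wallis n)^2 * (real n + 1))"
    by (simp add: mult_ac)
  also have "\<dots> \<le> 1 * 1"
    using wallis_sq_le[of "2*n"] wallis_sq_le[of n] by (intro mult_mono) auto
  finally have "(wallis (2*n) * wallis n * (real n + 1))^2 \<le> 1^2"
    by simp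
  then show ?thesis
    by (rule power2_le_imp_le) simp
qed

lemma binom_term_nonneg: "binom_term n \<ge> 0"
  by (simp add: binom_term_eq_wallis wallis_nonneg)

lemma binom_term_Suc_le: "binom_term (Suc n) \<le> 1 / (real (Suc n))^2"
proof -
  have "wallis (2 * Suc n) * wallis (Suc n) \<le> 1 / (real (Suc n) + 1)"
    using wallis_double_mult_le[of "Suc n"] by (simp add: field_simps)
  also have "\<dots> \<le> 1 / real (Suc n)"
    by (simp add: frac_le)
  finally show ?thesis
    unfolding binom_term_eq_wallis power2_eq_square
    by (simp add: divide_right_mono flip: divide_divide_eq_left)
qed

lemma summable_binom_term_Suc: "summable (\<lambda>n. binom_term (Suc n))"
proof (rule summable_comparison_test')
  show "summable (\<lambda>n. 1 / (real (Suc n))^2)"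
    using inverse_power_summable[of 2, where 'a=real] summable_Suc_iff[of "\<lambda>n. inverse (real n ^ 2)"]
    by (simp add: divide_inverse)
  show "norm (binom_term (Suc n)) \<le> 1 / (real (Suc n))^2" for n
    using binom_term_Suc_le[of n] binom_term_nonneg[of "Suc n"] by simp
qed

section \<open>A logarithmic generating function\<close>

definition wallis_log :: "real \<Rightarrow> real" where
  "wallis_log y = 2 * ln 2 - 2 * ln (1 + sqrt (1 - y))"

lemma summable_wallis_Suc_power: "\<bar>y\<bar> < 1 \<Longrightarrow> summable (\<lambda>n. wallis (Suc n) * y^n)"
proof (rule summable_comparison_test')
  assume "\<bar>y\<bar> < 1"
  then show "summable (\<lambda>n. \<bar>y\<bar>^n)"
    by (intro summable_geometric) simp
  show "norm (wallis (Suc n) * y^n) \<le> \<bar>y\<bar>^n" for n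
    using wallis_le_1[of "Suc n"] wallis_nonneg[of "Suc n"]
    by (simp add: abs_mult power_abs mult_left_le_one_le)
qed

lemma suminf_wallis_Suc_power:
  assumes y: "\<bar>y\<bar> < 1"
  shows "(\<Sum>n. wallis (Suc n) * y^n) = 1 / (sqrt (1 - y) * (1 + sqrt (1 - y)))"
proof (cases "y = 0")
  case True
  have "(\<Sum>n. wallis (Suc n) * 0^n) = wallis 1"
    by (subst powser_zero) simp
  then show ?thesis
    using True by (simp add: wallis_Suc wallis_0)
next
  case False
  define s where "s = sqrt (1 - y)"
  have s: "s > 0" "s \<noteq> 1" "y = (1 - s) * (1 + s)"
    using y False by (auto simp: s_def algebra_simps)
  have "(\<lambda>n. wallis (Suc n) * y^(Suc n)) sums (1 / s - wallis 0 * y^0)"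
    using wallis_sums[OF y] unfolding s_def by (subst sums_Suc_iff) simp
  then have "(\<lambda>n. y * (wallis (Suc n) * y^n)) sums (1 / s - 1)"
    by (simp add: wallis_0 mult_ac)
  moreover have "(\<lambda>n. y * (wallis (Suc n) * y^n)) sums (y * (\<Sum>n. wallis (Suc n) * y^n))"
    by (intro sums_mult summable_sums summable_wallis_Suc_power y)
  ultimately have "y * (\<Sum>n. wallis (Suc n) * y^n) = 1 / s - 1"
    using sums_unique2 by blast
  also have "1 / s - 1 = y * (1 / (s * (1 + s)))"
  proof -
    have "1 + s \<noteq> 0" "s \<noteq> 0"
      using s(1) by simp_all
    then have "(1 - s) * (1 + s) * (1 / (s * (1 + s))) = (1 - s) / s"
      by simp
    moreover have "1 / s - 1 = (1 - s) / s"
      using \<open>s \<noteq> 0\<close> by (simp add: diff_divide_distrib)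
    ultimately show ?thesis
      unfolding s(3) by simp
  qed
  finally show ?thesis
    using mult_left_cancel[OF False] unfolding s_def by blast
qed

lemma has_real_derivative_wallis_log:
  assumes y: "\<bar>y\<bar> < 1"
  shows "(wallis_log has_real_derivative 1 / (sqrt (1 - y) * (1 + sqrt (1 - y)))) (at y)"
proof -
  have s: "sqrt (1 - y) > 0"
    using y by simp
  have "(wallis_log has_real_derivative (0 - 2 * ((inverse (sqrt (1 - y)) / 2 * (0 - 1)) / (1 + sqrt (1 - y))))) (at y)"
    unfolding wallis_log_def using s by (auto intro!: derivative_eq_intros simp: add_pos_pos algebra_simps)
  moreover have "0 - 2 * ((inverse t / 2 * (0 - 1)) / (1 + t)) = 1 / (t * (1 + t))" if "t > 0" for t :: real
    using that by (simp add: inverse_eq_divide divide_divide_eq_left)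
  ultimately show ?thesis
    using s by simp
qed

lemma wallis_div_sums:
  assumes y: "\<bar>y\<bar> < 1"
  shows "(\<lambda>m. wallis m * y^m / real m) sums wallis_log y"
proof -
  define G where "G x = (\<Sum>n. wallis (Suc n) / real (Suc n) * x^(Suc n))" for x
  have summable_G: "summable (\<lambda>n. wallis (Suc n) / real (Suc n) * x^(Suc n))" if "\<bar>x\<bar> < 1" for x
  proof (rule summable_comparison_test')
    show "summable (\<lambda>n. \<bar>x\<bar>^n)"
      using that by (intro summable_geometric) simp
    show "norm (wallis (Suc n) / real (Suc n) * x^(Suc n)) \<le> \<bar>x\<bar>^n" for n
    proof -
      have "norm (wallis (Suc n) / real (Suc n) * x^(Suc n)) = wallis (Suc n) / real (Suc n) * (\<bar>x\<bar> * \<bar>x\<bar>^n)"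
        using wallis_nonneg[of "Suc n"] by (simp add: abs_mult power_abs)
      also have "\<dots> \<le> 1 * (1 * \<bar>x\<bar>^n)"
        using wallis_le_1[of "Suc n"] wallis_nonneg[of "Suc n"] that
        by (intro mult_mono) (auto simp: divide_le_eq)
      finally show ?thesis
        by simp
    qed
  qed
  have "(G has_real_derivative (\<Sum>n. wallis (Suc n) * x^n)) (at x)" if "\<bar>x\<bar> < 1" for x
  proof -
    have "DERIV G x :> (\<Sum>n. wallis (Suc n) / real (Suc n) * real (Suc n) * x^n)"
      unfolding G_def
      by (rule DERIV_power_series'[where R=1]) (use that summable_wallis_Suc_power in \<open>auto simp del: of_nat_Suc\<close>)
    then show ?thesis
      by (simp del: of_nat_Suc)
  qed
  then have "((\<lambda>x. G x - wallis_log x) has_real_derivative 0) (at x)" if "\<bar>x\<bar> < 1" for x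
    using DERIV_diff[OF _ has_real_derivative_wallis_log] suminf_wallis_Suc_power that by fastforce
  then obtain c where c: "\<And>x. x \<in> {-1<..<1} \<Longrightarrow> G x - wallis_log x = c"
    using has_field_derivative_zero_constant[of "{-1<..<1}" "\<lambda>x. G x - wallis_log x"]
    by (force intro: has_field_derivative_at_within)
  have "c = 0"
    using c[of 0] by (simp add: G_def wallis_log_def)
  then have "G y = wallis_log y"
    using c[of y] y by (auto simp: abs_less_iff)
  then have "(\<lambda>n. wallis (Suc n) * y^(Suc n) / real (Suc n)) sums wallis_log y"
    using summable_sums[OF summable_G[OF y]] unfolding G_def by (simp add: mult_ac)
  then show ?thesis
    by (subst (asm) sums_Suc_iff) simp
qed

definition wallis_even_coeff :: "nat \<Rightarrow> real" where
  "wallis_even_coeff n = wallis (2*n) / real n"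

lemma wallis_even_coeff_nonneg: "wallis_even_coeff n \<ge> 0"
  by (simp add: wallis_even_coeff_def wallis_nonneg)

lemma wallis_even_coeff_le:
  assumes "n \<ge> 1"
  shows "wallis_even_coeff n \<le> real n powr (-3/2)"
proof (rule power2_le_imp_le)
  have "(wallis (2*n))^2 \<le> 1 / (2*real n + 1)"
    using wallis_sq_le[of "2*n"] by (simp add: le_divide_eq)
  also have "\<dots> \<le> 1 / real n"
    using assms by (intro divide_left_mono) auto
  finally have "(wallis_even_coeff n)^2 \<le> (1 / real n) / (real n)^2"
    unfolding wallis_even_coeff_def power_divide by (intro divide_right_mono) auto
  also have "\<dots> = (real n powr (-3/2))^2"
  proof -
    have "(real n powr (-3/2))^2 = real n powr (-3/2 + -3/2)"
      by (simp only: power2_eq_square powr_add)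
    also have "-3/2 + -3/2 = (-3::real)"
      by simp
    also have "real n powr (-3) = inverse (real n ^ 3)"
      using assms by (simp only: powr_minus) (simp add: powr_numeral)
    finally show ?thesis
      by (simp only: power2_eq_square power3_eq_cube divide_inverse mult_1 inverse_mult_distrib)
  qed
  finally show "(wallis_even_coeff n)^2 \<le> (real n powr (-3/2))^2" .
qed simp

lemma summable_wallis_even_coeff: "summable wallis_even_coeff"
proof (rule summable_comparison_test')
  show "summable (\<lambda>n. real n powr (-3/2))"
    by (simp add: summable_real_powr_iff)
  show "norm (wallis_even_coeff n) \<le> real n powr (-3/2)" if "n \<ge> 1" for n
    using wallis_even_coeff_le[OF that] wallis_even_coeff_nonneg[of n] by simp
qed

lemma wallis_even_coeff_sums:
  assumes x: "\<bar>x\<bar> < 1"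
  shows "(\<lambda>n. wallis_even_coeff n * x^(2*n)) sums (wallis_log x + wallis_log (-x))"
proof -
  define b where "b m = wallis m * x^m / real m + wallis m * (-x)^m / real m" for m
  have "b sums (wallis_log x + wallis_log (-x))"
    unfolding b_def using x by (intro sums_add wallis_div_sums) auto
  then have "(\<lambda>n. sum b {n*2..<n*2+2}) sums (wallis_log x + wallis_log (-x))"
    by (rule sums_group) simp
  moreover have "sum b {n*2..<n*2+2} = wallis_even_coeff n * x^(2*n)" for n
  proof -
    have "sum b {n*2..<n*2+2} = b (2*n) + b (2*n+1)"
      by (simp add: numeral_2_eq_2 mult.commute)
    moreover have "b (2*n+1) = 0"
      unfolding b_def by (simp add: power_minus_odd)
    moreover have "b (2*n) = wallis_even_coeff n * x^(2*n)"
      unfolding b_def wallis_even_coeff_def power_mult by simp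
    ultimately show ?thesis
      by simp
  qed
  ultimately show ?thesis
    by simp
qed

section \<open>Integrals of even powers and of the logarithm of the cosine\<close>

lemma has_integral_real_derivative:
  fixes F f :: "real \<Rightarrow> real"
  assumes "a \<le> b" "\<And>x. x \<in> {a..b} \<Longrightarrow> (F has_real_derivative f x) (at x)"
  shows "(f has_integral (F b - F a)) {a..b}"
  using assms by (intro fundamental_theorem_of_calculus)
    (auto simp: has_real_derivative_iff_has_vector_derivative[symmetric] intro: has_field_derivative_at_within)

lemma has_integral_real_derivative_interior:
  fixes F f :: "real \<Rightarrow> real"
  assumes "a \<le> b" "continuous_on {a..b} F" "\<And>x. x \<in> {a<..<b} \<Longrightarrow> (F has_real_derivative f x) (at x)"
  shows "(f has_integral (F b - F a)) {a..b}"
  using assms by (intro fundamental_theorem_of_calculus_interior)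
    (auto simp: has_real_derivative_iff_has_vector_derivative[symmetric])

lemma has_integral_cos_power_recurrence:
  "((\<lambda>x. real (k+2) * cos x ^ (k+2) - real (k+1) * cos x ^ k) has_integral 0) {0..pi/2}"
proof -
  have "((\<lambda>x. real (k+2) * cos x ^ (k+2) - real (k+1) * cos x ^ k) has_integral
          (sin (pi/2) * cos (pi/2) ^ (k+1) - sin 0 * cos 0 ^ (k+1))) {0..pi/2}"
  proof (rule has_integral_real_derivative)
    fix x :: real
    have "((\<lambda>x. cos x ^ (k+1)) has_real_derivative (real (k+1) * (- sin x) * cos x ^ k)) (at x)"
      using DERIV_power[OF DERIV_cos[of x], of "k+1"] by (simp add: mult.assoc)
    then have "((\<lambda>x. sin x * cos x ^ (k+1)) has_real_derivative
                cos x * cos x ^ (k+1) + sin x * (real (k+1) * (- sin x) * cos x ^ k)) (at x)"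
      by (rule DERIV_mult[OF DERIV_sin, THEN DERIV_cong]) (simp add: algebra_simps)
    moreover have "cos x * cos x ^ (k+1) + sin x * (real (k+1) * (- sin x) * cos x ^ k)
                   = real (k+2) * cos x ^ (k+2) - real (k+1) * cos x ^ k"
    proof -
      have identity: "v * v = 1 - u * u \<Longrightarrow> u * (u * P) + v * (K * (- v) * P) = (K + 1) * (u * u * P) - K * P"
        for u v K P :: real
        by algebra
      have "sin x * sin x = 1 - cos x * cos x"
        using sin_squared_eq[of x] by (simp add: power2_eq_square)
      from identity[OF this, of "cos x ^ k" "real (k+1)"] show ?thesis
        by (simp add: mult.assoc)
    qed
    ultimately show "((\<lambda>x. sin x * cos x ^ (k+1)) has_real_derivative
                       real (k+2) * cos x ^ (k+2) - real (k+1) * cos x ^ k) (at x)"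
      by simp
  qed simp
  then show ?thesis
    by simp
qed

lemma has_integral_cos_power_even: "((\<lambda>x. cos x ^ (2*m)) has_integral (pi/2 * wallis m)) {0..pi/2}"
proof (induction m)
  case 0
  have "((\<lambda>x. 1::real) has_integral (pi/2 - 0)) {0..pi/2}"
    by (rule has_integral_real_derivative) (auto intro!: derivative_eq_intros)
  then show ?case
    by (simp add: wallis_0)
next
  case (Suc m)
  define q where "q = real (2*m+1) / real (2*m+2)"
  have sum: "((\<lambda>x. (1 / real (2*m+2)) * (real (2*m+2) * cos x ^ (2*m+2) - real (2*m+1) * cos x ^ (2*m))
              + q * cos x ^ (2*m)) has_integral (1 / real (2*m+2) * 0 + q * (pi/2 * wallis m))) {0..pi/2}"
    by (intro has_integral_add has_integral_mult_right has_integral_cos_power_recurrence Suc.IH)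
  have integrand: "(1 / real (2*m+2)) * (real (2*m+2) * cos x ^ (2*m+2) - real (2*m+1) * cos x ^ (2*m))
                 + q * cos x ^ (2*m) = cos x ^ (2 * Suc m)" for x
  proof -
    have "a \<noteq> 0 \<Longrightarrow> (1/a) * (a*X - b*Y) + (b/a) * Y = X" for a b X Y :: real
      by (simp add: field_simps)
    moreover have "2 * Suc m = 2*m + 2"
      by simp
    ultimately show ?thesis
      unfolding q_def by simp
  qed
  have total: "1 / real (2*m+2) * 0 + q * (pi/2 * wallis m) = pi/2 * wallis (Suc m)"
    by (simp add: q_def wallis_Suc field_simps)
  show ?case
    using sum unfolding integrand total .
qed

definition log_cos_integral :: "real \<Rightarrow> real" where
  "log_cos_integral x = integral {0..x} (\<lambda>t. ln (cos t))"

lemma log_cos_integral_0 [simp]: "log_cos_integral 0 = 0"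
  by (simp add: log_cos_integral_def)

lemma has_real_derivative_log_cos_integral_within:
  assumes "b < pi/2" "x \<in> {0..b}"
  shows "(log_cos_integral has_real_derivative ln (cos x)) (at x within {0..b})"
proof -
  have "cos t \<noteq> 0" if "t \<in> {0..b}" for t
    using that assms(1) cos_gt_zero_pi[of t] by auto
  then have "continuous_on {0..b} (\<lambda>t. ln (cos t))"
    by (intro continuous_intros) auto
  then show ?thesis
    unfolding log_cos_integral_def using assms(2) by (rule integral_has_real_derivative)
qed

lemma continuous_on_log_cos_integral: "b < pi/2 \<Longrightarrow> continuous_on {0..b} log_cos_integral"
  unfolding continuous_on_eq_continuous_within
  using has_real_derivative_log_cos_integral_within DERIV_continuous by blast

lemma has_real_derivative_log_cos_integral:
  assumes "0 < x" "x < pi/2"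
  shows "(log_cos_integral has_real_derivative ln (cos x)) (at x)"
proof -
  define b where "b = (x + pi/2) / 2"
  have "b < pi/2" "x < b"
    using assms by (simp_all add: b_def)
  then have "(log_cos_integral has_real_derivative ln (cos x)) (at x within {0..b})"
    using assms by (intro has_real_derivative_log_cos_integral_within) auto
  moreover have "at x within {0..b} = at x"
    using \<open>x < b\<close> assms by (intro at_within_Icc_at) auto
  ultimately show ?thesis
    by simp
qed

lemma has_real_derivative_log_cos_integral_affine:
  assumes "0 < a - c * t" "a - c * t < pi/2"
  shows "((\<lambda>t. log_cos_integral (a - c * t)) has_real_derivative (ln (cos (a - c * t)) * (- c))) (at t)"
proof -
  have "((\<lambda>t. a - c * t) has_real_derivative (- c)) (at t)"
    by (auto intro!: derivative_eq_intros)
  then show ?thesis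
    using DERIV_chain2[where g="\<lambda>t. a - c * t", OF has_real_derivative_log_cos_integral[OF assms]] by blast
qed

lemma log_cos_integral_duplication:
  assumes a: "0 < a" "a < pi/4"
  shows "2 * log_cos_integral (pi/2 - a) - 2 * log_cos_integral a - log_cos_integral (pi/2 - 2*a)
         + (pi/2 - 2*a) * ln 2 = 0"
proof -
  define E where "E x = 2 * log_cos_integral (pi/2 - 1 * x) - 2 * log_cos_integral x
                        - log_cos_integral (pi/2 - 2 * x) + (pi/2 - 2*x) * ln 2" for x
  have cont: "continuous_on {0..pi/2 - a} log_cos_integral"
    using a by (intro continuous_on_log_cos_integral) simp
  have "continuous_on {a..pi/4} E"
    unfolding E_def by (intro continuous_intros continuous_on_compose2[OF cont]) (use a in auto)
  moreover have "(E has_real_derivative 0) (at x)" if x: "a < x" "x < pi/4" for x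
  proof -
    have s: "sin x > 0" and c: "cos x > 0"
      using x a pi_gt_zero by (auto intro!: sin_gt_zero cos_gt_zero_pi)
    have d1: "((\<lambda>t. log_cos_integral (pi/2 - 1 * t)) has_real_derivative (ln (cos (pi/2 - 1 * x)) * (- 1))) (at x)"
      using x a pi_gt_zero by (intro has_real_derivative_log_cos_integral_affine) auto
    have d2: "(log_cos_integral has_real_derivative ln (cos x)) (at x)"
      using x a by (intro has_real_derivative_log_cos_integral) auto
    have d3: "((\<lambda>t. log_cos_integral (pi/2 - 2 * t)) has_real_derivative (ln (cos (pi/2 - 2 * x)) * (- 2))) (at x)"
      using x a pi_gt_zero by (intro has_real_derivative_log_cos_integral_affine) auto
    have d4: "((\<lambda>t. (pi/2 - 2*t) * ln 2) has_real_derivative (- 2 * ln 2)) (at x)"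
      by (auto intro!: derivative_eq_intros)
    have "(E has_real_derivative (2 * (ln (cos (pi/2 - 1 * x)) * (- 1)) - 2 * ln (cos x)
            - (ln (cos (pi/2 - 2 * x)) * (- 2)) + (- 2 * ln 2))) (at x)"
      unfolding E_def[abs_def] by (intro DERIV_add DERIV_diff DERIV_cmult d1 d2 d3 d4)
    moreover have "ln (cos (pi/2 - 2 * x)) = ln 2 + ln (sin x) + ln (cos x)"
      using s c by (simp add: cos_diff sin_double ln_mult)
    moreover have "cos (pi/2 - 1 * x) = sin x"
      by (simp add: cos_diff)
    ultimately show ?thesis
      by simp
  qed
  ultimately have "E (pi/4) = E a"
    using DERIV_isconst_end[OF a(2)] by blast
  moreover have "pi/2 - pi/4 = pi/4" "pi/2 - 2 * (pi/4) = 0"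
    by simp_all
  then have "E (pi/4) = 0"
    by (simp add: E_def)
  ultimately show ?thesis
    by (simp add: E_def)
qed

lemma sqrt_one_minus_cos: "0 \<le> t \<Longrightarrow> t \<le> pi \<Longrightarrow> sqrt (1 - cos t) = sqrt 2 * sin (t/2)"
  using cos_double_sin[of "t/2"] sin_ge_zero[of "t/2"] by (simp add: real_sqrt_mult)

lemma sqrt_one_plus_cos: "0 \<le> t \<Longrightarrow> t \<le> pi \<Longrightarrow> sqrt (1 + cos t) = sqrt 2 * cos (t/2)"
  using cos_double_cos[of "t/2"] cos_ge_zero[of "t/2"] by (simp add: real_sqrt_mult)

lemma one_plus_sqrt2_sin: "1 + sqrt 2 * sin x = 2 * sqrt 2 * (cos (3*pi/8 - x/2) * cos (pi/8 - x/2))"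
proof -
  have "3*pi/8 - x/2 - (pi/8 - x/2) = pi/4" "3*pi/8 - x/2 + (pi/8 - x/2) = pi/2 - x"
    by simp_all
  then have "cos (3*pi/8 - x/2) * cos (pi/8 - x/2) = (sqrt 2 / 2 + sin x) / 2"
    unfolding cos_times_cos by (simp add: cos_45 cos_diff)
  then have "2 * sqrt 2 * (cos (3*pi/8 - x/2) * cos (pi/8 - x/2)) = sqrt 2 * (sqrt 2 / 2 + sin x)"
    by simp
  then show ?thesis
    by (simp add: algebra_simps)
qed

lemma one_plus_sqrt2_cos: "1 + sqrt 2 * cos x = 2 * sqrt 2 * (cos (pi/8 + x/2) * cos (pi/8 - x/2))"
proof -
  have "pi/8 + x/2 - (pi/8 - x/2) = x" "pi/8 + x/2 + (pi/8 - x/2) = pi/4"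
    by simp_all
  then have "cos (pi/8 + x/2) * cos (pi/8 - x/2) = (cos x + sqrt 2 / 2) / 2"
    unfolding cos_times_cos by (simp add: cos_45)
  then have "2 * sqrt 2 * (cos (pi/8 + x/2) * cos (pi/8 - x/2)) = sqrt 2 * (cos x + sqrt 2 / 2)"
    by simp
  then show ?thesis
    by (simp add: algebra_simps)
qed

lemma wallis_log_cos_even_part:
  assumes t: "0 \<le> t" "t \<le> pi/2"
  shows "wallis_log (cos t) + wallis_log (- cos t)
         = - 2 * ln 2 - 2 * ln (cos (3*pi/8 - t/4)) - 4 * ln (cos (pi/8 - t/4)) - 2 * ln (cos (pi/8 + t/4))"
proof -
  have pos: "cos (3*pi/8 - t/4) > 0" "cos (pi/8 - t/4) > 0" "cos (pi/8 + t/4) > 0"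
    using t pi_gt_zero by (intro cos_gt_zero_pi; linarith)+
  have "1 + sqrt (1 - cos t) = 2 * sqrt 2 * (cos (3*pi/8 - t/4) * cos (pi/8 - t/4))"
    using one_plus_sqrt2_sin[of "t/2"] sqrt_one_minus_cos[of t] t by simp
  moreover have "1 + sqrt (1 - - cos t) = 2 * sqrt 2 * (cos (pi/8 + t/4) * cos (pi/8 - t/4))"
    using one_plus_sqrt2_cos[of "t/2"] sqrt_one_plus_cos[of t] t by simp
  ultimately show ?thesis
    unfolding wallis_log_def using pos by (simp add: ln_mult ln_sqrt)
qed

lemma has_integral_log_cos_combination:
  "((\<lambda>t. - 2 * ln 2 - 2 * ln (cos (3*pi/8 - t/4)) - 4 * ln (cos (pi/8 - t/4)) - 2 * ln (cos (pi/8 + t/4)))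
     has_integral (- pi * ln 2 - 8 * log_cos_integral (3*pi/8) - 8 * log_cos_integral (pi/8))) {0..pi/2}"
proof -
  define V where "V t = - 2 * ln 2 * t + 8 * log_cos_integral (3*pi/8 - (1/4) * t)
                         + 16 * log_cos_integral (pi/8 - (1/4) * t) - 8 * log_cos_integral (pi/8 - (-1/4) * t)" for t
  have cont: "continuous_on {0..3*pi/8} log_cos_integral"
    by (rule continuous_on_log_cos_integral) simp
  have "((\<lambda>t. - 2 * ln 2 - 2 * ln (cos (3*pi/8 - t/4)) - 4 * ln (cos (pi/8 - t/4)) - 2 * ln (cos (pi/8 + t/4)))
          has_integral (V (pi/2) - V 0)) {0..pi/2}"
  proof (rule has_integral_real_derivative_interior)
    show "continuous_on {0..pi/2} V"
      unfolding V_def by (intro continuous_intros continuous_on_compose2[OF cont]) (auto simp: field_simps)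
    fix t :: real
    assume t: "t \<in> {0<..<pi/2}"
    have d1: "((\<lambda>t. log_cos_integral (3*pi/8 - (1/4) * t)) has_real_derivative
                 (ln (cos (3*pi/8 - (1/4) * t)) * (- (1/4)))) (at t)"
      and d2: "((\<lambda>t. log_cos_integral (pi/8 - (1/4) * t)) has_real_derivative
                 (ln (cos (pi/8 - (1/4) * t)) * (- (1/4)))) (at t)"
      and d3: "((\<lambda>t. log_cos_integral (pi/8 - (-1/4) * t)) has_real_derivative
                 (ln (cos (pi/8 - (-1/4) * t)) * (- (-1/4)))) (at t)"
      using t pi_gt_zero by (intro has_real_derivative_log_cos_integral_affine; auto)+
    have "(V has_real_derivative
            (- 2 * ln 2 * 1 + 8 * (ln (cos (3*pi/8 - (1/4) * t)) * (- (1/4)))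
             + 16 * (ln (cos (pi/8 - (1/4) * t)) * (- (1/4)))
             - 8 * (ln (cos (pi/8 - (-1/4) * t)) * (- (-1/4))))) (at t)"
      unfolding V_def[abs_def] by (intro DERIV_diff DERIV_add DERIV_cmult d1 d2 d3 DERIV_ident)
    then show "(V has_real_derivative - 2 * ln 2 - 2 * ln (cos (3*pi/8 - t/4))
                 - 4 * ln (cos (pi/8 - t/4)) - 2 * ln (cos (pi/8 + t/4))) (at t)"
      by simp
  qed simp
  moreover have "3*pi/8 - 1/4 * (pi/2) = pi/4" "pi/8 - 1/4 * (pi/2) = 0" "pi/8 - (-1/4) * (pi/2) = pi/4"
    by simp_all
  then have "V (pi/2) - V 0 = - pi * ln 2 - 8 * log_cos_integral (3*pi/8) - 8 * log_cos_integral (pi/8)"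
    unfolding V_def by simp
  ultimately show ?thesis
    by simp
qed

lemma has_integral_wallis_even_series:
  "((\<lambda>t. \<Sum>i. wallis_even_coeff i * cos t ^ (2*i)) has_integral (pi/2 * (\<Sum>n. binom_term (Suc n)))) {0..pi/2}"
proof -
  define F where "F t = (\<Sum>i. wallis_even_coeff i * cos t ^ (2*i))" for t
  have "uniform_limit {0..pi/2} (\<lambda>n t. \<Sum>i<n. wallis_even_coeff i * cos t ^ (2*i)) F sequentially"
    unfolding F_def
  proof (rule Weierstrass_m_test[OF _ summable_wallis_even_coeff])
    fix n and t :: real
    have "\<bar>cos t ^ (2*n)\<bar> \<le> 1"
      by (simp add: power_abs power_le_one)
    then show "norm (wallis_even_coeff n * cos t ^ (2*n)) \<le> wallis_even_coeff n"
      using wallis_even_coeff_nonneg[of n] by (simp add: abs_mult mult_left_le)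
  qed
  then obtain I J where IJ: "\<And>n. ((\<lambda>t. \<Sum>i<n. wallis_even_coeff i * cos t ^ (2*i)) has_integral I n) {0..pi/2}"
      "(F has_integral J) {0..pi/2}" "I \<longlonglongrightarrow> J"
    by (rule uniform_limit_integral) (auto intro!: continuous_intros)
  have "((\<lambda>t. \<Sum>i<n. wallis_even_coeff i * cos t ^ (2*i)) has_integral
          (\<Sum>i<n. wallis_even_coeff i * (pi/2 * wallis i))) {0..pi/2}" for n
    by (intro has_integral_sum has_integral_mult_right has_integral_cos_power_even) auto
  then have I: "I n = (\<Sum>i<n. wallis_even_coeff i * (pi/2 * wallis i))" for n
    using IJ(1) has_integral_unique by blast
  have "binom_term sums (\<Sum>n. binom_term (Suc n))"
    using summable_sums[OF summable_binom_term_Suc] by (subst (asm) sums_Suc_iff) (simp add: binom_term_def)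
  then have "(\<lambda>i. pi/2 * binom_term i) sums (pi/2 * (\<Sum>n. binom_term (Suc n)))"
    by (rule sums_mult)
  moreover have "pi/2 * binom_term i = wallis_even_coeff i * (pi/2 * wallis i)" for i
    by (simp add: binom_term_eq_wallis wallis_even_coeff_def mult_ac)
  ultimately have "(\<lambda>i. wallis_even_coeff i * (pi/2 * wallis i)) sums (pi/2 * (\<Sum>n. binom_term (Suc n)))"
    by (simp only:)
  then have "I \<longlonglongrightarrow> pi/2 * (\<Sum>n. binom_term (Suc n))"
    unfolding sums_def I .
  then have "J = pi/2 * (\<Sum>n. binom_term (Suc n))"
    using IJ(3) LIMSEQ_unique by blast
  with IJ(2) show ?thesis
    unfolding F_def by (simp only:)
qed

lemma suminf_binom_term_log_cos_integral:
  "pi/2 * (\<Sum>n. binom_term (Suc n)) = - pi * ln 2 - 8 * log_cos_integral (3*pi/8) - 8 * log_cos_integral (pi/8)"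
proof -
  have "((\<lambda>t. - 2 * ln 2 - 2 * ln (cos (3*pi/8 - t/4)) - 4 * ln (cos (pi/8 - t/4)) - 2 * ln (cos (pi/8 + t/4)))
          has_integral (pi/2 * (\<Sum>n. binom_term (Suc n)))) {0..pi/2}"
  proof (rule has_integral_spike[OF negligible_sing _ has_integral_wallis_even_series])
    fix t
    assume t: "t \<in> {0..pi/2} - {0}"
    then have "cos t < 1" "cos t \<ge> 0"
      using pi_gt_zero by (auto intro!: cos_monotone_0_pi[of 0 t, simplified] cos_ge_zero)
    then have "(\<lambda>i. wallis_even_coeff i * cos t ^ (2*i)) sums (wallis_log (cos t) + wallis_log (- cos t))"
      by (intro wallis_even_coeff_sums) simp
    then show "- 2 * ln 2 - 2 * ln (cos (3*pi/8 - t/4)) - 4 * ln (cos (pi/8 - t/4)) - 2 * ln (cos (pi/8 + t/4))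
               = (\<Sum>i. wallis_even_coeff i * cos t ^ (2*i))"
      using wallis_log_cos_even_part[of t] t sums_unique by fastforce
  qed
  then show ?thesis
    using has_integral_log_cos_combination has_integral_unique by blast
qed

section \<open>The inverse tangent integral\<close>

definition Ti2 :: "real \<Rightarrow> real" where
  "Ti2 y = (\<Sum>k. (-1)^k * y^(2*k+1) / (2*real k + 1)^2)"

definition arctan_quot :: "real \<Rightarrow> real" where
  "arctan_quot y = (\<Sum>k. (-1)^k * y^(2*k) / (2*real k + 1))"

lemma Ti2_0 [simp]: "Ti2 0 = 0"
  by (simp add: Ti2_def)

lemma arctan_quot_term_le:
  assumes "\<bar>y\<bar> \<le> r"
  shows "norm ((-1)^k * y^(2*k) / (2*real k + 1)) \<le> (r^2)^k"
proof -
  have "norm ((-1)^k * y^(2*k) / (2*real k + 1)) = (y^2)^k / (2*real k + 1)"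
    by (simp add: abs_mult power_abs power_mult)
  also have "\<dots> \<le> (y^2)^k"
    by (simp add: divide_le_eq mult_le_cancel_left1)
  also have "\<dots> \<le> (r^2)^k"
    by (rule power_mono) (use power_mono[OF assms, of 2] in simp_all)
  finally show ?thesis .
qed

lemma has_real_derivative_Ti2:
  assumes y: "\<bar>y\<bar> < 1"
  shows "(Ti2 has_real_derivative arctan_quot y) (at y)"
proof -
  define r where "r = (1 + \<bar>y\<bar>) / 2"
  have r: "\<bar>y\<bar> < r" "r < 1"
    using y by (simp_all add: r_def)
  let ?S = "{-r..r}"
  have "((\<lambda>x. \<Sum>k. (-1)^k * x^(2*k+1) / (2*real k + 1)^2) has_field_derivative
          (\<Sum>k. (-1)^k * y^(2*k) / (2*real k + 1))) (at y)"
  proof (rule has_field_derivative_series'(2))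
    show "((\<lambda>x. (-1)^k * x^(2*k+1) / (2*real k + 1)^2) has_field_derivative
            (-1)^k * x^(2*k) / (2*real k + 1)) (at x within ?S)" for k x
    proof -
      define c where "c = (-1::real)^k / (2*real k + 1)^2"
      have "((\<lambda>x. c * x^(2*k+1)) has_field_derivative c * (real (2*k+1) * x^(2*k+1 - Suc 0))) (at x within ?S)"
        by (intro DERIV_cmult DERIV_pow has_field_derivative_at_within)
      moreover have "c * (real (2*k+1) * x^(2*k+1 - Suc 0)) = (-1)^k * x^(2*k) / (2*real k + 1)"
      proof -
        have cancel: "d \<noteq> 0 \<Longrightarrow> a / (d * d) * (d * X) = a * X / d" for a d X :: real
          by (simp add: field_simps)
        have nat_arith: "real (2*k+1) = 2*real k + 1" "2*k+1 - Suc 0 = 2*k"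
          by simp_all
        show ?thesis
          unfolding c_def power2_eq_square nat_arith using cancel[of "2*real k + 1"] by simp
      qed
      ultimately show ?thesis
        unfolding c_def by simp
    qed
    show "uniformly_convergent_on ?S (\<lambda>n x. \<Sum>k<n. (-1)^k * x^(2*k) / (2*real k + 1))"
    proof (rule Weierstrass_m_test'[of _ _ "\<lambda>k. (r^2)^k"])
      show "summable (\<lambda>k. (r^2)^k)"
        using r by (intro summable_geometric) (simp add: abs_square_less_1)
      show "norm ((-1)^k * x^(2*k) / (2*real k + 1)) \<le> (r^2)^k" if "x \<in> ?S" for k x
        using that by (intro arctan_quot_term_le) auto
    qed
    show "(0::real) \<in> ?S" "y \<in> interior ?S"
      using r by auto
    show "summable (\<lambda>k. (-1)^k * (0::real)^(2*k+1) / (2*real k + 1)^2)"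
      by simp
  qed simp
  then show ?thesis
    unfolding Ti2_def arctan_quot_def by (simp add: fun_eq_iff)
qed

lemma continuous_on_Ti2: "continuous_on {-1<..<1} Ti2"
proof (rule continuous_at_imp_continuous_on, rule ballI)
  fix x :: real
  assume "x \<in> {-1<..<1}"
  then show "isCont Ti2 x"
    by (intro DERIV_isCont[OF has_real_derivative_Ti2]) auto
qed

lemma mult_arctan_quot:
  assumes y: "\<bar>y\<bar> < 1"
  shows "y * arctan_quot y = arctan y"
proof -
  have "summable (\<lambda>k. (-1)^k * y^(2*k) / (2*real k + 1))"
  proof (rule summable_comparison_test'[of "\<lambda>k. (y^2)^k" 0])
    show "summable (\<lambda>k. (y^2)^k)"
      using y by (intro summable_geometric) (simp add: abs_square_less_1)
    show "norm ((-1)^k * y^(2*k) / (2*real k + 1)) \<le> (y^2)^k" for k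
      using arctan_quot_term_le[of y "\<bar>y\<bar>" k] by simp
  qed
  then have "y * arctan_quot y = (\<Sum>k. y * ((-1)^k * y^(2*k) / (2*real k + 1)))"
    unfolding arctan_quot_def by (rule suminf_mult[symmetric])
  also have "\<dots> = (\<Sum>k. (-1)^k * (1 / real (k*2+1) * y^(k*2+1)))"
    by (intro suminf_cong) (simp add: mult_ac)
  also have "\<dots> = arctan y"
    using y by (intro arctan_series[symmetric]) auto
  finally show ?thesis .
qed

lemma Im_Li2_imaginary:
  assumes r: "\<bar>r\<bar> < 1"
  shows "Im (Li2 (complex_of_real r * \<i>)) = Ti2 r"
proof -
  define z where "z = complex_of_real r * \<i>"
  have "summable (\<lambda>k. z^(Suc k) / of_nat (Suc k)^2)"
  proof (rule summable_comparison_test'[of "\<lambda>k. \<bar>r\<bar>^(Suc k)" 0])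
    show "summable (\<lambda>k. \<bar>r\<bar>^(Suc k))"
      using r by (subst summable_Suc_iff) (intro summable_geometric, simp)
    have "norm (z^(Suc k) / of_nat (Suc k)^2) = \<bar>r\<bar>^(Suc k) / (real (Suc k))^2" for k
      unfolding z_def norm_divide norm_power norm_mult norm_of_nat by simp
    also have "\<bar>r\<bar>^(Suc k) / (real (Suc k))^2 \<le> \<bar>r\<bar>^(Suc k)" for k
      by (simp add: divide_le_eq mult_le_cancel_left1 mult_less_0_iff)
    finally show "norm (z^(Suc k) / of_nat (Suc k)^2) \<le> \<bar>r\<bar>^(Suc k)" for k .
  qed
  then have "(\<lambda>k. Im (z^(Suc k) / of_nat (Suc k)^2)) sums Im (Li2 z)"
    unfolding Li2_def by (intro sums_Im summable_sums)
  then have "(\<lambda>n. \<Sum>k\<in>{n*2..<n*2+2}. Im (z^(Suc k) / of_nat (Suc k)^2)) sums Im (Li2 z)"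
    by (rule sums_group) simp
  moreover have "(\<Sum>k\<in>{n*2..<n*2+2}. Im (z^(Suc k) / of_nat (Suc k)^2)) = (-1)^n * r^(2*n+1) / (2*real n + 1)^2" for n
  proof -
    have sum: "(\<Sum>k\<in>{n*2..<n*2+2}. Im (z^(Suc k) / of_nat (Suc k)^2))
               = Im (z^(2*n+1) / of_nat (2*n+1)^2) + Im (z^(2*n+2) / of_nat (2*n+2)^2)"
      by (simp add: numeral_2_eq_2 mult.commute)
    have odd: "z^(2*n+1) = complex_of_real (r^(2*n+1) * (-1)^n) * \<i>"
      unfolding z_def power_mult_distrib by (simp add: power_add power_mult)
    have even: "z^(2*n+2) = complex_of_real (r^(2*n+2) * (-1)^(n+1))"
      unfolding z_def power_mult_distrib by (simp add: power_add power_mult)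
    have "Im (z^(2*n+2) / of_nat (2*n+2)^2) = 0"
      unfolding even by (metis Im_complex_of_real of_real_divide of_real_of_nat_eq of_real_power)
    moreover have "Im (z^(2*n+1) / of_nat (2*n+1)^2) = (-1)^n * r^(2*n+1) / (2*real n + 1)^2"
    proof -
      define A where "A = r^(2*n+1) * (-1)^n"
      define B where "B = (real (2*n+1))^2"
      have "(of_nat (2*n+1) :: complex)^2 = complex_of_real B"
        by (simp add: B_def)
      moreover have "(complex_of_real A * \<i>) / complex_of_real B = complex_of_real (A / B) * \<i>"
        by (simp add: of_real_divide)
      ultimately have "Im (z^(2*n+1) / of_nat (2*n+1)^2) = A / B"
        unfolding odd A_def[symmetric] by simp
      then show ?thesis
        by (simp add: A_def B_def mult_ac)
    qed
    ultimately show ?thesis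
      unfolding sum by simp
  qed
  ultimately show ?thesis
    unfolding Ti2_def z_def by (simp add: sums_iff)
qed

lemma tan_pi_div_8: "tan (pi/8) = sqrt 2 - 1"
proof -
  have "tan (pi/8) = sin (pi/4) / (cos (pi/4) + 1)"
    using tan_half[of "pi/8"] by simp
  also have "\<dots> = sqrt 2 / (sqrt 2 + 2)"
    by (simp add: sin_45 cos_45 field_simps)
  also have "\<dots> = sqrt 2 - 1"
  proof -
    have "(sqrt 2 - 1) * (sqrt 2 + 2) = sqrt (2::real)"
      by (simp add: algebra_simps)
    moreover have "sqrt 2 + 2 > (0::real)"
      by (simp add: add_pos_pos)
    ultimately show ?thesis
      by (simp add: divide_eq_eq)
  qed
  finally show ?thesis .
qed

lemma tan_nonneg_less_1: "0 \<le> a \<Longrightarrow> a < pi/4 \<Longrightarrow> 0 \<le> tan a \<and> tan a < 1"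
  using tan_monotone[of a "pi/4"] tan_45 pi_gt_zero tan_gt_zero[of a] by (cases "a = 0") auto

definition Ti2_log_cos :: "real \<Rightarrow> real" where
  "Ti2_log_cos t = - (pi/2 - 2*t) * ln 2 + log_cos_integral (pi/2 - 2*t) + 4 * log_cos_integral t
                   + 2*t * ln (tan t) - 2 * Ti2 (tan t)"

lemma has_real_derivative_Ti2_log_cos:
  assumes x: "0 < x" "x < pi/4"
  shows "(Ti2_log_cos has_real_derivative 0) (at x)"
proof -
  have tan: "0 < tan x" "tan x < 1"
    using x tan_nonneg_less_1[of x] tan_gt_zero[of x] by auto
  have c: "cos x > 0" and s: "sin x > 0"
    using x pi_gt_zero by (auto intro!: cos_gt_zero_pi sin_gt_zero)
  have dtan: "(tan has_real_derivative inverse ((cos x)^2)) (at x)"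
    using c by (intro DERIV_tan) simp
  have d1: "((\<lambda>t. - (pi/2 - 2*t) * ln 2) has_real_derivative 2 * ln 2) (at x)"
    by (auto intro!: derivative_eq_intros)
  have d2: "((\<lambda>t. log_cos_integral (pi/2 - 2 * t)) has_real_derivative (ln (cos (pi/2 - 2 * x)) * (- 2))) (at x)"
    using x by (intro has_real_derivative_log_cos_integral_affine) auto
  have d3: "(log_cos_integral has_real_derivative ln (cos x)) (at x)"
    using x by (intro has_real_derivative_log_cos_integral) auto
  have "((\<lambda>t. ln (tan t)) has_real_derivative inverse (tan x) * inverse ((cos x)^2)) (at x)"
    using DERIV_chain2[where f=ln and g=tan, OF DERIV_ln[OF tan(1)] dtan] .
  from DERIV_mult[OF DERIV_cmult[OF DERIV_ident, of 2] this]
  have d4: "((\<lambda>t. 2*t * ln (tan t)) has_real_derivative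
              2 * ln (tan x) + 2 * x * (inverse (tan x) * inverse ((cos x)^2))) (at x)"
    by (simp add: algebra_simps)
  have d5: "((\<lambda>t. Ti2 (tan t)) has_real_derivative arctan_quot (tan x) * inverse ((cos x)^2)) (at x)"
    using DERIV_chain2[where f=Ti2 and g=tan, OF has_real_derivative_Ti2 dtan] tan by simp
  have "(Ti2_log_cos has_real_derivative
          (2 * ln 2 + ln (cos (pi/2 - 2 * x)) * (- 2) + 4 * ln (cos x)
           + (2 * ln (tan x) + 2 * x * (inverse (tan x) * inverse ((cos x)^2)))
           - 2 * (arctan_quot (tan x) * inverse ((cos x)^2)))) (at x)"
    unfolding Ti2_log_cos_def[abs_def] by (intro DERIV_add DERIV_diff DERIV_cmult d1 d2 d3 d4 d5)
  moreover have "arctan_quot (tan x) = x * inverse (tan x)"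
    using mult_arctan_quot[of "tan x"] arctan_tan[of x] tan x pi_gt_zero by (simp add: field_simps)
  moreover have "ln (cos (pi/2 - 2 * x)) = ln 2 + ln (sin x) + ln (cos x)"
    using s c by (simp add: cos_diff sin_double ln_mult)
  moreover have "ln (tan x) = ln (sin x) - ln (cos x)"
    using s c by (simp add: tan_def ln_div)
  ultimately show ?thesis
    by (simp add: algebra_simps)
qed

lemma Ti2_log_cos_const:
  assumes "0 < a" "a < pi/4" "0 < b" "b < pi/4"
  shows "Ti2_log_cos a = Ti2_log_cos b"
proof -
  have const: "Ti2_log_cos y = Ti2_log_cos x" if xy: "0 < x" "x < y" "y < pi/4" for x y
  proof (rule DERIV_isconst_end[OF xy(2)])
    show "continuous_on {x..y} Ti2_log_cos"
      using xy by (intro continuous_at_imp_continuous_on ballI DERIV_isCont[OF has_real_derivative_Ti2_log_cos]) auto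
    show "\<And>t. x < t \<Longrightarrow> t < y \<Longrightarrow> DERIV Ti2_log_cos t :> 0"
      using xy by (intro has_real_derivative_Ti2_log_cos) auto
  qed
  show ?thesis
    using assms const[of a b] const[of b a] by (cases a b rule: linorder_cases) auto
qed

text \<open>This is 2 F(a) - F(2a) for F = Ti2_log_cos, with the singular terms 2t ln(tan t) combined into
  4a ln((1 - (tan a)^2) / 2); unlike F it is continuous at 0, where its value is elementary.\<close>
definition Ti2_log_cos_double :: "real \<Rightarrow> real" where
  "Ti2_log_cos_double a = - (pi - 4*a) * ln 2 - 2 * log_cos_integral (2*a) + 8 * log_cos_integral a
                          + 4*a * ln ((1 - (tan a)^2) / 2) - 4 * Ti2 (tan a) + 2 * Ti2 (tan (2*a))"

lemma Ti2_log_cos_double_eq: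
  assumes a: "0 < a" "a < pi/8"
  shows "Ti2_log_cos_double a = 2 * Ti2_log_cos a - Ti2_log_cos (2*a)"
proof -
  have tan: "0 < tan a" "tan a < 1"
    using a tan_nonneg_less_1[of a] tan_gt_zero[of a] by auto
  have "cos a \<noteq> 0" "cos (2*a) \<noteq> 0"
    using a pi_gt_zero cos_gt_zero_pi[of a] cos_gt_zero_pi[of "2*a"] by auto
  then have "tan (2*a) = 2 * tan a / (1 - (tan a)^2)"
    by (rule tan_double)
  moreover have "(tan a)^2 < 1"
    using tan by (simp add: power_less_one_iff abs_square_less_1)
  ultimately have log_eq: "ln ((1 - (tan a)^2) / 2) = ln (tan a) - ln (tan (2*a))"
    using tan by (simp add: ln_div ln_mult)
  have "4*a * ln ((1 - (tan a)^2) / 2) = 2 * (2*a) * ln (tan a) - 2 * (2*a) * ln (tan (2*a))"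
    unfolding log_eq by (simp add: algebra_simps)
  moreover have "2 * log_cos_integral (pi/2 - 2*a) - 2 * log_cos_integral (2*a) - log_cos_integral (pi/2 - 2*(2*a))
                 + (pi/2 - 2*(2*a)) * ln 2 = 0"
    using a by (intro log_cos_integral_duplication) auto
  ultimately show ?thesis
    unfolding Ti2_log_cos_double_def Ti2_log_cos_def by (simp add: algebra_simps)
qed

lemma continuous_on_Ti2_log_cos_double: "continuous_on {0..pi/16} Ti2_log_cos_double"
proof -
  have range: "cos x \<noteq> 0 \<and> tan x \<in> {-1<..<1}" if "x \<in> {0..pi/8}" for x
  proof -
    have "0 \<le> x" "x \<le> pi/8"
      using that by auto
    then have "0 \<le> x" "x < pi/4"
      using pi_gt_zero by linarith+
    then show ?thesis
      using cos_gt_zero_pi[of x] tan_nonneg_less_1[of x] by auto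
  qed
  have sub: "{0..pi/16} \<subseteq> {0..pi/8}"
    using pi_gt_zero by auto
  have cont_int: "continuous_on {0..pi/8} log_cos_integral"
    using pi_gt_zero by (intro continuous_on_log_cos_integral) simp
  have cont_tan: "continuous_on {0..pi/8} tan"
    using range by (intro continuous_on_tan) auto
  have cont_tan_double: "continuous_on {0..pi/16} (\<lambda>a. tan (2*a))"
    by (rule continuous_on_compose2[OF cont_tan]) (auto intro!: continuous_intros)
  have "(1 - (tan x)^2) / 2 \<noteq> 0" if "x \<in> {0..pi/16}" for x
    using range[of x] that sub by (auto simp: abs_square_eq_1)
  then show ?thesis
    unfolding Ti2_log_cos_double_def using sub range
    by (intro continuous_intros continuous_on_compose2[OF cont_int]
        continuous_on_compose2[OF continuous_on_Ti2] continuous_on_subset[OF cont_tan sub]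
        cont_tan_double continuous_on_subset[OF cont_int sub]) auto
qed

lemma Ti2_log_cos_eq:
  assumes a: "0 < a" "a < pi/4"
  shows "Ti2_log_cos a = - pi * ln 2"
proof -
  have const: "Ti2_log_cos_double x = Ti2_log_cos a" if x: "x \<in> {0<..pi/16}" for x
  proof -
    have "0 < x" "x < pi/8" "2*x < pi/4"
      using x pi_gt_zero by auto
    then show ?thesis
      using Ti2_log_cos_const[of x a] Ti2_log_cos_const[of "2*x" a] a
      by (simp add: Ti2_log_cos_double_eq)
  qed
  have cont: "continuous_on (closure {0<..pi/16}) Ti2_log_cos_double"
    and zero: "0 \<in> closure {0<..pi/16::real}"
    using continuous_on_Ti2_log_cos_double pi_gt_zero by simp_all
  have "Ti2_log_cos_double 0 = Ti2_log_cos a"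
    by (rule continuous_constant_on_closure[OF cont const zero])
  then show ?thesis
    by (simp add: Ti2_log_cos_double_def)
qed

lemma suminf_binom_term_closed_form:
  "(\<Sum>n. binom_term (Suc n)) = 6 * ln 2 - 2 * ln (1 + sqrt 2) - 16 / pi * Ti2 (sqrt 2 - 1)"
proof -
  define S where "S = (\<Sum>n. binom_term (Suc n))"
  define L1 L2 L3 where "L1 = log_cos_integral (pi/8)" "L2 = log_cos_integral (pi/4)"
    "L3 = log_cos_integral (3*pi/8)"
  have series: "pi/2 * S = - pi * ln 2 - 8 * L3 - 8 * L1"
    unfolding S_def L1_L2_L3_def by (rule suminf_binom_term_log_cos_integral)
  have "2 * log_cos_integral (pi/2 - pi/8) - 2 * log_cos_integral (pi/8) - log_cos_integral (pi/2 - 2*(pi/8))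
        + (pi/2 - 2*(pi/8)) * ln 2 = 0"
    using pi_gt_zero by (intro log_cos_integral_duplication) auto
  moreover have "pi/2 - pi/8 = 3*pi/8" "pi/2 - 2*(pi/8) = pi/4"
    by simp_all
  ultimately have duplication: "2 * L3 - 2 * L1 - L2 + pi/4 * ln 2 = 0"
    unfolding L1_L2_L3_def by simp
  have "Ti2_log_cos (pi/8) = - pi * ln 2"
    using pi_gt_zero by (intro Ti2_log_cos_eq) auto
  moreover have "2 * (pi/8) = pi/4"
    by simp
  ultimately have Ti2: "- pi/4 * ln 2 + L2 + 4 * L1 + pi/4 * ln (sqrt 2 - 1) - 2 * Ti2 (sqrt 2 - 1) = - pi * ln 2"
    unfolding Ti2_log_cos_def L1_L2_L3_def tan_pi_div_8 \<open>pi/2 - 2*(pi/8) = pi/4\<close> by simp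
  have "(sqrt 2 - 1) * (1 + sqrt 2) = (1::real)"
    by (simp add: algebra_simps)
  moreover have "sqrt 2 - 1 > (0::real)" "1 + sqrt 2 > (0::real)"
    by (simp_all add: add_pos_pos)
  ultimately have "ln (sqrt 2 - 1) = - ln (1 + sqrt (2::real))"
    using ln_mult[of "sqrt 2 - 1" "1 + sqrt 2"] by simp
  then have "pi * ln (sqrt 2 - 1) = - (pi * ln (1 + sqrt 2))"
    by simp
  with series duplication Ti2 have "pi * S = pi * (6 * ln 2 - 2 * ln (1 + sqrt 2)) - 16 * Ti2 (sqrt 2 - 1)"
    by (simp add: field_simps)
  also have "\<dots> = pi * (6 * ln 2 - 2 * ln (1 + sqrt 2) - 16 / pi * Ti2 (sqrt 2 - 1))"
    using pi_gt_zero by (simp add: right_diff_distrib)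
  finally show ?thesis
    unfolding S_def using pi_gt_zero by simp
qed

theorem mainTheorem13:
  defines "t \<equiv> (\<lambda>n::nat. real ((4*n) choose (2*n)) * real ((2*n) choose n) / (real n * 64 ^ n))"
  shows "summable (\<lambda>n. t (Suc n))
    \<and> summable (hypergeom_term [1, 1, 5/4, 7/4] [2, 2, 2] 1)
    \<and> (\<Sum>n. t (Suc n)) = 3/16 * hypergeom [1, 1, 5/4, 7/4] [2, 2, 2] 1
    \<and> 3/16 * hypergeom [1, 1, 5/4, 7/4] [2, 2, 2] 1
        = 6 * ln 2 - 2 * ln (1 + sqrt 2)
          - 16 / pi * Im (Li2 (complex_of_real (sqrt 2 - 1) * \<i>))"
proof -
  have t: "t = binom_term"
    unfolding t_def binom_term_def by simp
  have hypergeom_term: "hypergeom_term [1, 1, 5/4, 7/4] [2, 2, 2] 1 = (\<lambda>n. 16/3 * binom_term (Suc n))"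
    by (simp add: fun_eq_iff binom_term_Suc_eq_hypergeom_term)
  have hypergeom: "hypergeom [1, 1, 5/4, 7/4] [2, 2, 2] 1 = 16/3 * (\<Sum>n. binom_term (Suc n))"
    unfolding hypergeom_def hypergeom_term by (rule suminf_mult[OF summable_binom_term_Suc])
  have "\<bar>sqrt 2 - 1\<bar> < (1::real)"
    using tan_pi_div_8 tan_nonneg_less_1[of "pi/8"] pi_gt_zero by auto
  then have "Im (Li2 (complex_of_real (sqrt 2 - 1) * \<i>)) = Ti2 (sqrt 2 - 1)"
    by (rule Im_Li2_imaginary)
  then show ?thesis
    unfolding t hypergeom hypergeom_term suminf_binom_term_closed_form
    using summable_binom_term_Suc by (simp add: summable_mult)
qed

end
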